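(* Let $f(x)=\prod_{a\in\mathcal{F}} f_a(x_a)$ be a factorized model and consider the chance-constrained Bethe free energy Lagrangian \[ \begin{aligned} L[q] &= F[q] + \sum_{i\in \mathcal{V}} \gamma_i \Big[ \int q_i\, dx_i - 1 \Big] + \sum_{a\in \mathcal{F}} \gamma_a \Big[ \int q_a\, dx_a - 1 \Big] \\ &\quad + \sum_{a\in \mathcal{F}} \sum_{i\in \mathcal{V}(a)} \int \zeta_{ia}(x_i)\Big[q_i(x_i) - \int q_a(x_a)\, dx_{a\setminus i}\Big] dx_i + \sum_{i\in \mathcal{V}} \eta_i\Big[\int q_i(x_i)\, g_i(x_i)\, dx_i - (1 - \epsilon)\Big], \end{aligned} \] with $F[q]=-\sum_{a}\int q_a\log f_a\,dx_a+\sum_{a}\int q_a\log q_a\,dx_a-\sum_{i}(d_i-1)\int q_i\log q_i\,dx_i$. For $j\in\mathcal{V}$ let \[ q_j^*(x_j;\eta_j)=\frac{1}{Z_j(\eta_j)}\exp\!\big(-\eta_j g_j(x_j)\big)\prod_{a\in\mathcal{F}(j)}\mu_{aj}(x_j) \] denote the form of the stationary points of $L$ as a functional of $q_j$, where $\mu_{aj}(x_j)=\int f_a(x_a)\prod_{i\in\mathcal{V}(a),i\neq j}\mu_{ia}(x_i)\,dx_{a\setminus j}$, $\mu_{ia}=\exp\zeta_{ia}$, and $Z_j(\eta_j)$ is the normalizer. Define \[ q_j^{(0)}(x_j)=q_j^*(x_j;\eta_j=0),\qquad \Phi_j^{(0)}=\int_{\mathcal{S}_j}q_j^{(0)}(x_j)\,dx_j,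 \] \[ \eta_j^*=\log(\epsilon\,\Phi_j^{(0)})-\log(1-\epsilon)-\log(1-\Phi_j^{(0)}). \] Then, when the chance constraint on $x_j$ is active (i.e. $\int q_j g_j\,dx_j=1-\epsilon$ holds with equality), the stationary points of $L$ as a functional of $q_j$ are of the form \[ q_j^*(x_j;\eta_j=\eta_j^* )=\begin{cases}\dfrac{1-\epsilon}{\Phi_j^{(0)}}\,q_j^{(0)}(x_j) & \text{if } x_j\in\mathcal{S}_j,\\[2mm] \dfrac{\epsilon}{1-\Phi_j^{(0)}}\,q_j^{(0)}(x_j) & \text{otherwise.}\end{cases} \]
   Context: Bipartite factor graph $(\mathcal{F},\mathcal{V},\mathcal{E})$: factor nodes $a\in\mathcal{F}$ with non-negative factor functions $f_a$, variable nodes $i\in\mathcal{V}$, edge $(i,a)$ iff $x_i$ is an argument of $f_a$; $x_a$ collects variables $x_i$, $i\in\mathcal{V}(a)$; $\mathcal{V}(a)$, $\mathcal{F}(i)$ denote neighborhoods, $d_i=|\mathcal{F}(i)|$, and $x_{a\setminus i}$ denotes all variables of $x_a$ except $x_i$. The functional's arguments are beliefs $q_a(x_a)$ and $q_i(x_i)$. A chance constraint on $x_j$ requires $1-\epsilon\le\int_{\mathcal{S}_j}q_j(x_j)\,dx_j=\int q_j g_j\,dx_j$, where $\mathcal{S}_j$ is a "safe" region, $g_j$ its indicator function, and $\epsilon\in[0,1]$. $\gamma,\zeta,\eta$ are Lagrange multipliers; stationary points are in the sense of the calculus of variations with marginalization constraints imposed. *)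

theory Defs
  imports "HOL-Analysis.Analysis"
begin

text \<open>Factor graph: factors of type 'f (set Fs), variables of type 'v,
  V a = neighbourhood of factor a, variable values of type 'x with
  reference measure M (dx).  Factor functions f a act on assignments
  x :: 'v \<Rightarrow> 'x (only the coordinates in V a matter).
  zeta i a is the Lagrange multiplier function zeta_{ia}, mu_{ia} = exp zeta_{ia}.\<close>

definition var_nbrs :: "'f set \<Rightarrow> ('f \<Rightarrow> 'v set) \<Rightarrow> 'v \<Rightarrow> 'f set" where
  "var_nbrs Fs V j = {a \<in> Fs. j \<in> V a}"

definition msg_fv ::
  "'x measure \<Rightarrow> ('f \<Rightarrow> 'v set) \<Rightarrow> ('f \<Rightarrow> ('v \<Rightarrow> 'x) \<Rightarrow> real)
   \<Rightarrow> ('v \<Rightarrow> 'f \<Rightarrow> 'x \<Rightarrow> real) \<Rightarrow> 'f \<Rightarrow> 'v \<Rightarrow> 'x \<Rightarrow> real" where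
  "msg_fv M V f zeta a j y =
     (\<integral>x. f a (x(j := y)) * (\<Prod>i\<in>V a - {j}. exp (zeta i a (x i)))
        \<partial>(PiM (V a - {j}) (\<lambda>_. M)))"

definition qstar_unnorm ::
  "'x measure \<Rightarrow> 'f set \<Rightarrow> ('f \<Rightarrow> 'v set) \<Rightarrow> ('f \<Rightarrow> ('v \<Rightarrow> 'x) \<Rightarrow> real)
   \<Rightarrow> ('v \<Rightarrow> 'f \<Rightarrow> 'x \<Rightarrow> real) \<Rightarrow> 'x set \<Rightarrow> 'v \<Rightarrow> real \<Rightarrow> 'x \<Rightarrow> real" where
  "qstar_unnorm M Fs V f zeta S j eta y =
     exp (- eta * indicator S y) * (\<Prod>a\<in>var_nbrs Fs V j. msg_fv M V f zeta a j y)"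

definition qstar ::
  "'x measure \<Rightarrow> 'f set \<Rightarrow> ('f \<Rightarrow> 'v set) \<Rightarrow> ('f \<Rightarrow> ('v \<Rightarrow> 'x) \<Rightarrow> real)
   \<Rightarrow> ('v \<Rightarrow> 'f \<Rightarrow> 'x \<Rightarrow> real) \<Rightarrow> 'x set \<Rightarrow> 'v \<Rightarrow> real \<Rightarrow> 'x \<Rightarrow> real" where
  "qstar M Fs V f zeta S j eta y =
     qstar_unnorm M Fs V f zeta S j eta y
       / (\<integral>z. qstar_unnorm M Fs V f zeta S j eta z \<partial>M)"

definition q0 ::
  "'x measure \<Rightarrow> 'f set \<Rightarrow> ('f \<Rightarrow> 'v set) \<Rightarrow> ('f \<Rightarrow> ('v \<Rightarrow> 'x) \<Rightarrow> real)
   \<Rightarrow> ('v \<Rightarrow> 'f \<Rightarrow> 'x \<Rightarrow> real) \<Rightarrow> 'x set \<Rightarrow> 'v \<Rightarrow> 'x \<Rightarrow> real" where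
  "q0 M Fs V f zeta S j = qstar M Fs V f zeta S j 0"

definition Phi0 ::
  "'x measure \<Rightarrow> 'f set \<Rightarrow> ('f \<Rightarrow> 'v set) \<Rightarrow> ('f \<Rightarrow> ('v \<Rightarrow> 'x) \<Rightarrow> real)
   \<Rightarrow> ('v \<Rightarrow> 'f \<Rightarrow> 'x \<Rightarrow> real) \<Rightarrow> 'x set \<Rightarrow> 'v \<Rightarrow> real" where
  "Phi0 M Fs V f zeta S j = (\<integral>y. q0 M Fs V f zeta S j y * indicator S y \<partial>M)"

definition eta_star :: "real \<Rightarrow> real \<Rightarrow> real" where
  "eta_star \<epsilon> \<Phi> = ln (\<epsilon> * \<Phi>) - ln (1 - \<epsilon>) - ln (1 - \<Phi>)"

end

theory Submission
  imports Defs
begin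

text \<open>With the messages fixed, every stationary density is the fixed density
  \<open>p = \<Prod>\<^sub>a \<mu>\<^sub>a\<^sub>j\<close> reweighted by \<open>exp (-\<eta>)\<close> on \<open>S\<close>, then normalised. Writing \<open>A\<close> and \<open>B\<close>
  for the \<open>p\<close>-masses of \<open>S\<close> and of its complement, the mass of \<open>S\<close> under the
  tilted density is \<open>w A / (w A + B)\<close> with \<open>w = exp (-\<eta>)\<close>. An active constraint fixes
  this to \<open>1 - \<epsilon>\<close>, which forces \<open>A, B > 0\<close> and \<open>w = (1 - \<epsilon>) B / (\<epsilon> A)\<close>; since
  \<open>\<Phi>\<^sub>j\<^sup>0 = A / (A + B)\<close>, this is \<open>\<eta> = \<eta>\<^sub>j\<^sup>*\<close>, and rescaling the untilted density on
  \<open>S\<close> and off \<open>S\<close> gives the stated piecewise form.\<close>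

definition tilt :: "'x measure \<Rightarrow> ('x \<Rightarrow> real) \<Rightarrow> 'x set \<Rightarrow> real \<Rightarrow> 'x \<Rightarrow> real" where
  "tilt M p S \<eta> y =
     exp (- \<eta> * indicator S y) * p y / (\<integral>z. exp (- \<eta> * indicator S z) * p z \<partial>M)"

lemma msg_fv_nonneg:
  assumes "\<And>x. f a x \<ge> 0"
  shows "msg_fv M V f zeta a j y \<ge> 0"
  unfolding msg_fv_def using assms
  by (intro Bochner_Integration.integral_nonneg) (auto intro!: mult_nonneg_nonneg prod_nonneg)

lemma qstar_eq_tilt:
  "qstar M Fs V f zeta S j \<eta> =
     tilt M (\<lambda>y. \<Prod>a\<in>var_nbrs Fs V j. msg_fv M V f zeta a j y) S \<eta>"
  by (simp add: fun_eq_iff qstar_def qstar_unnorm_def tilt_def)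

lemma tilt_weight_of_active_mass:
  fixes A B \<epsilon> w :: real
  assumes "0 \<le> A" "0 \<le> B" "0 < \<epsilon>" "\<epsilon> < 1" "0 < w"
    and active: "w * A / (w * A + B) = 1 - \<epsilon>"
  shows "0 < A" "0 < B" "w = (1 - \<epsilon>) * B / (\<epsilon> * A)"
proof -
  have Z: "w * A + B \<noteq> 0"
    using active \<open>\<epsilon> < 1\<close> by auto
  show A: "0 < A"
    using active \<open>0 \<le> A\<close> \<open>\<epsilon> < 1\<close> by (cases "A = 0") auto
  show "0 < B"
  proof (rule ccontr)
    assume "\<not> 0 < B"
    with \<open>0 \<le> B\<close> have "B = 0" by simp
    with active A \<open>0 < w\<close> \<open>0 < \<epsilon>\<close> show False by simp
  qed
  have "w * A * \<epsilon> = (1 - \<epsilon>) * B"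
    using active Z by (simp add: field_simps)
  then show "w = (1 - \<epsilon>) * B / (\<epsilon> * A)"
    using A \<open>0 < \<epsilon>\<close> by (simp add: field_simps)
qed

lemma eta_star_of_tilt_weight:
  fixes A B \<epsilon> \<eta> :: real
  assumes "0 < A" "0 < B" "0 < \<epsilon>" "\<epsilon> < 1"
    and "exp (- \<eta>) = (1 - \<epsilon>) * B / (\<epsilon> * A)"
  shows "\<eta> = eta_star \<epsilon> (A / (A + B))"
proof -
  have "\<eta> = - ln ((1 - \<epsilon>) * B / (\<epsilon> * A))"
    using arg_cong[OF assms(5), of ln] by simp
  also have "\<dots> = ln (\<epsilon> * (A / (A + B))) - ln (1 - \<epsilon>) - ln (B / (A + B))"
    using assms(1-4) by (simp add: ln_div ln_mult)
  also have "B / (A + B) = 1 - A / (A + B)"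
    using assms(1,2) by (simp add: field_simps)
  finally show ?thesis
    unfolding eta_star_def .
qed

context
  fixes M :: "'x measure" and p :: "'x \<Rightarrow> real" and S :: "'x set"
  assumes p_integrable: "integrable M p"
    and p_nonneg: "\<And>y. 0 \<le> p y"
    and S_sets: "S \<in> sets M"
begin

lemma set_integrable_in_out:
  "set_integrable M S p" "set_integrable M (- S) p"
proof -
  show S: "set_integrable M S p"
    unfolding set_integrable_def using S_sets p_integrable by (rule integrable_mult_indicator)
  have "(\<lambda>y. indicator (- S) y *\<^sub>R p y) = (\<lambda>y. p y - indicator S y *\<^sub>R p y)"
    by (auto simp: fun_eq_iff indicator_def)
  then show "set_integrable M (- S) p"
    using S p_integrable unfolding set_integrable_def by simp
qed

lemma integral_tilt_weight:
  "(\<integral>y. exp (- \<eta> * indicator S y) * p y \<partial>M)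
     = exp (- \<eta>) * (LINT y:S|M. p y) + (LINT y:-S|M. p y)"
proof -
  have "(\<lambda>y. exp (- \<eta> * indicator S y) * p y)
      = (\<lambda>y. exp (- \<eta>) * (indicator S y *\<^sub>R p y) + indicator (- S) y *\<^sub>R p y)"
    by (auto simp: fun_eq_iff indicator_def)
  then show ?thesis
    using set_integrable_in_out unfolding set_lebesgue_integral_def set_integrable_def by simp
qed

lemma tilt_eq:
  "tilt M p S \<eta> y
     = (if y \<in> S then exp (- \<eta>) else 1) * p y
       / (exp (- \<eta>) * (LINT z:S|M. p z) + (LINT z:-S|M. p z))"
  unfolding tilt_def integral_tilt_weight by simp

lemma set_integral_tilt:
  "(\<integral>y. tilt M p S \<eta> y * indicator S y \<partial>M)
     = exp (- \<eta>) * (LINT z:S|M. p z)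
       / (exp (- \<eta>) * (LINT z:S|M. p z) + (LINT z:-S|M. p z))"
proof -
  have "(\<lambda>y. tilt M p S \<eta> y * indicator S y)
      = (\<lambda>y. exp (- \<eta>) * (indicator S y *\<^sub>R p y)
             / (exp (- \<eta>) * (LINT z:S|M. p z) + (LINT z:-S|M. p z)))"
    by (auto simp: fun_eq_iff tilt_eq indicator_def)
  then show ?thesis
    by (simp add: set_lebesgue_integral_def)
qed

lemma tilt_active_constraint:
  assumes "0 < \<epsilon>" "\<epsilon> < 1"
    and active: "(\<integral>y. tilt M p S \<eta> y * indicator S y \<partial>M) = 1 - \<epsilon>"
  defines "\<Phi> \<equiv> \<integral>y. tilt M p S 0 y * indicator S y \<partial>M"
  shows "\<eta> = eta_star \<epsilon> \<Phi> \<and>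
    (\<forall>y. tilt M p S \<eta> y =
      (if y \<in> S then (1 - \<epsilon>) / \<Phi> * tilt M p S 0 y else \<epsilon> / (1 - \<Phi>) * tilt M p S 0 y))"
proof -
  define A where "A = (LINT z:S|M. p z)"
  define B where "B = (LINT z:-S|M. p z)"
  have "0 \<le> A" "0 \<le> B"
    unfolding A_def B_def set_lebesgue_integral_def using p_nonneg
    by (simp_all add: Bochner_Integration.integral_nonneg)
  with assms(1,2) active have weight:
      "0 < A" "0 < B" "exp (- \<eta>) = (1 - \<epsilon>) * B / (\<epsilon> * A)"
    using tilt_weight_of_active_mass[of A B \<epsilon> "exp (- \<eta>)"]
    unfolding set_integral_tilt A_def[symmetric] B_def[symmetric] by auto
  have \<Phi>: "\<Phi> = A / (A + B)" and \<Phi>_compl: "1 - \<Phi> = B / (A + B)"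
    using weight(1,2) unfolding \<Phi>_def set_integral_tilt A_def B_def by (simp_all add: field_simps)
  have q0: "tilt M p S 0 y = p y / (A + B)" for y
    unfolding tilt_eq A_def B_def by simp
  have normaliser: "exp (- \<eta>) * A + B = B / \<epsilon>"
    using weight assms(1) by (simp add: field_simps)
  have "tilt M p S \<eta> y = (if y \<in> S then (1 - \<epsilon>) * p y / A else \<epsilon> * p y / B)" for y
    using weight assms(1)
    unfolding tilt_eq A_def[symmetric] B_def[symmetric] normaliser by (simp add: weight(3) field_simps)
  moreover have "(1 - \<epsilon>) / \<Phi> * tilt M p S 0 y = (1 - \<epsilon>) * p y / A"
    and "\<epsilon> / (1 - \<Phi>) * tilt M p S 0 y = \<epsilon> * p y / B" for y
    using weight(1,2) unfolding q0 \<Phi>_compl unfolding \<Phi>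
    by (simp_all add: divide_simps add_pos_pos)
  ultimately have "tilt M p S \<eta> y =
      (if y \<in> S then (1 - \<epsilon>) / \<Phi> * tilt M p S 0 y else \<epsilon> / (1 - \<Phi>) * tilt M p S 0 y)" for y
    by simp
  moreover have "\<eta> = eta_star \<epsilon> \<Phi>"
    unfolding \<Phi> using weight(1,2) assms(1,2) weight(3) by (rule eta_star_of_tilt_weight)
  ultimately show ?thesis
    by blast
qed

end

theorem theorem1:
  fixes M :: "'x measure" and Fs :: "'f set" and V :: "'f \<Rightarrow> 'v set"
    and f :: "'f \<Rightarrow> ('v \<Rightarrow> 'x) \<Rightarrow> real" and zeta :: "'v \<Rightarrow> 'f \<Rightarrow> 'x \<Rightarrow> real"
    and S :: "'x set" and j :: 'v and \<epsilon> \<eta> :: real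
  assumes "finite Fs"
    and "\<And>a. a \<in> Fs \<Longrightarrow> finite (V a)"
    and "\<And>a x. a \<in> Fs \<Longrightarrow> f a x \<ge> 0"
    and "S \<in> sets M"
    and "0 < \<epsilon>" and "\<epsilon> < 1"
    and "integrable M (\<lambda>y. \<Prod>a\<in>var_nbrs Fs V j. msg_fv M V f zeta a j y)"
    and active: "(\<integral>y. qstar M Fs V f zeta S j \<eta> y * indicator S y \<partial>M) = 1 - \<epsilon>"
  shows "\<eta> = eta_star \<epsilon> (Phi0 M Fs V f zeta S j) \<and>
    (\<forall>y. qstar M Fs V f zeta S j \<eta> y =
      (if y \<in> S
       then (1 - \<epsilon>) / Phi0 M Fs V f zeta S j * q0 M Fs V f zeta S j y
       else \<epsilon> / (1 - Phi0 M Fs V f zeta S j) * q0 M Fs V f zeta S j y))"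
proof -
  have "0 \<le> (\<Prod>a\<in>var_nbrs Fs V j. msg_fv M V f zeta a j y)" for y
    using assms(3) by (intro prod_nonneg msg_fv_nonneg) (auto simp: var_nbrs_def)
  from tilt_active_constraint[OF assms(7) this assms(4-6)] active
  show ?thesis
    unfolding Phi0_def q0_def qstar_eq_tilt by blast
qed

end
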